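(* Let $k \geq 2$ and $n \geq 1$ be integers, let $\Sigma_k = \{0,1,\ldots,k-1\}$, and let $\mathcal{D}$ be the set of primitive words in $\Sigma_k^n$. Consider the following procedure, which outputs symbols one at a time: (1) output $0^{n-1}$; (2) repeatedly, letting $x$ be the last $n-1$ symbols output so far, choose the largest $i \in \{0,\ldots,k-1\}$ such that $xi$ is primitive and $xi$ has not yet appeared as a factor of the word output so far, and output $i$; terminate when there is no such $i$. Then this procedure terminates and outputs a word of length $|\mathcal{D}| + n - 1$ that contains every primitive word in $\Sigma_k^n$ as a factor.
   Context: A word $w$ is primitive if there is no word $x$ and integer $p \geq 2$ with $w = x^p$. A factor (subword) of a word is a contiguous block of consecutive symbols. *)

theory Defs
  imports Main "HOL-Library.Sublist"
begin

text \<open>Words over \<Sigma>_k = {0..k-1} are lists of naturals with entries < k.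
  Factor = contiguous subword = sublist (HOL-Library.Sublist).\<close>

definition primitive :: "'a list \<Rightarrow> bool" where
  "primitive w \<longleftrightarrow> \<not> (\<exists>x p. p \<ge> (2::nat) \<and> w = concat (replicate p x))"

definition prim_words :: "nat \<Rightarrow> nat \<Rightarrow> nat list set" where
  "prim_words k n = {w. length w = n \<and> set w \<subseteq> {..<k} \<and> primitive w}"

definition next_sym :: "nat \<Rightarrow> nat \<Rightarrow> nat list \<Rightarrow> nat option" where
  "next_sym k n w =
     (let x = drop (length w - (n - 1)) w;
          S = {i. i < k \<and> primitive (x @ [i]) \<and> \<not> sublist (x @ [i]) w}
      in if S = {} then None else Some (Max S))"

text \<open>Output after m steps (stays fixed once the procedure has stopped).\<close>
primrec gen :: "nat \<Rightarrow> nat \<Rightarrow> nat \<Rightarrow> nat list" where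
  "gen k n 0 = replicate (n - 1) 0"
| "gen k n (Suc m) = (case next_sym k n (gen k n m) of
       None \<Rightarrow> gen k n m
     | Some i \<Rightarrow> gen k n m @ [i])"

end

theory Submission
  imports Defs
begin

text \<open>Each length-n factor e of the output is an edge butlast e \<rightarrow> tl e of the de Bruijn
  graph on words of length n - 1, and the output is a trail from 0^(n-1) that never repeats an
  edge and uses only primitive ones; hence its length is the number of edges plus n - 1, and the
  procedure terminates.  Since primitivity is invariant under rotation, the primitive edges into
  a node correspond to those out of it, so when the procedure stops the trail is closed at
  0^(n-1), and every node all of whose out-edges are used has all of its in-edges used.  By
  greediness, all out-edges of a node x are used as soon as its edge with the least admissible
  symbol c is, which is the case once all out-edges of the node tl x c are used.  Induction on
  the number of trailing zeros then covers every node: for c = 0 the node tl x 0 has more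
  trailing zeros, and for c \<noteq> 0 the word x 0 is a proper power, and a period argument shows
  that appending zeros to tl x c walks along primitive edges to a node with more trailing
  zeros.\<close>

section \<open>Primitive words and periods\<close>

lemma rotate1_concat_replicate:
  "rotate1 (concat (replicate p x)) = concat (replicate p (rotate1 x))"
proof (induction p)
  case (Suc p)
  show ?case
  proof (cases x)
    case (Cons a b)
    then show ?thesis using Suc by (cases p) auto
  qed simp
qed simp

lemma not_primitive_rotate: "\<not> primitive w \<Longrightarrow> \<not> primitive (rotate m w)"
proof (induction m)
  case (Suc m)
  then show ?case unfolding primitive_def
    by (metis rotate_Suc rotate1_concat_replicate)
qed simp

lemma primitive_Cons_iff_snoc: "primitive (a # y) \<longleftrightarrow> primitive (y @ [a])"
proof
  show "primitive (y @ [a])" if "primitive (a # y)"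
    using that not_primitive_rotate[of "y @ [a]" "length y"] by (auto simp: rotate_append)
  show "primitive (a # y)" if "primitive (y @ [a])"
    using that not_primitive_rotate[of "a # y" 1] by auto
qed

definition periodic :: "nat \<Rightarrow> 'a list \<Rightarrow> bool" where
  "periodic d w \<longleftrightarrow> (\<forall>i < length w. \<forall>j < length w. i mod d = j mod d \<longrightarrow> w ! i = w ! j)"

lemma concat_replicate_nth:
  "i < p * length x \<Longrightarrow> concat (replicate p x) ! i = x ! (i mod length x)"
proof (induction p arbitrary: i)
  case (Suc p)
  then show ?case
    by (cases "i < length x") (auto simp: nth_append le_mod_geq)
qed simp

lemma not_primitive_imp_periodic:
  assumes "\<not> primitive w" "w \<noteq> []"
  obtains d where "0 < d" "d < length w" "d dvd length w" "periodic d w"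
proof -
  obtain x p where p: "p \<ge> 2" and w: "w = concat (replicate p x)"
    using assms(1) unfolding primitive_def by auto
  have lw: "length w = p * length x"
    unfolding w by (simp add: length_concat sum_list_replicate)
  have pos: "0 < length x"
    using assms(2) lw by (cases "length x") auto
  have "1 * length x < p * length x"
    using p pos by (intro mult_strict_right_mono) auto
  then have "length x < length w" using lw by simp
  moreover have "periodic (length x) w"
    unfolding periodic_def using concat_replicate_nth[of _ p x] lw w by auto
  ultimately show thesis using that pos lw by (metis dvd_triv_right)
qed

lemma periodic_nth_add:
  assumes "periodic d w" "i + m * d < length w"
  shows "w ! (i + m * d) = w ! i"
proof -
  have "(i + m * d) mod d = i mod d" by simp
  then show ?thesis using assms unfolding periodic_def by (meson add_lessD1)
qed

lemma periodic_zero_run_less: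
  assumes "periodic d (u @ b # replicate s a)" "0 < d" "b \<noteq> a"
  shows "s < d"
proof (rule ccontr)
  assume "\<not> s < d"
  then have "(u @ b # replicate s a) ! (length u + 1 * d) = (u @ b # replicate s a) ! length u"
    using periodic_nth_add[OF assms(1), of "length u" 1] by simp
  then show False using \<open>\<not> s < d\<close> assms(2,3) by (simp add: nth_append)
qed

lemma proper_divisor_le_half: "(e::nat) dvd n \<Longrightarrow> e < n \<Longrightarrow> 2 * e \<le> n"
  by (auto elim!: dvdE)

definition zero_shift :: "nat \<Rightarrow> nat list \<Rightarrow> nat list" where
  "zero_shift j u = drop j u @ replicate j 0"

lemma length_zero_shift [simp]: "j \<le> length u \<Longrightarrow> length (zero_shift j u) = length u"
  unfolding zero_shift_def by simp

lemma zero_shift_Suc: "zero_shift (Suc j) u = zero_shift j (tl u) @ [0]"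
  unfolding zero_shift_def by (simp add: drop_Suc replicate_append_same)

lemma zero_shift_tl_snoc: "j < length y \<Longrightarrow> zero_shift j (tl y @ [0]) = zero_shift (Suc j) y"
  unfolding zero_shift_def by (simp add: drop_Suc replicate_append_same)

lemma nth_zero_shift:
  "i < length u \<Longrightarrow> j \<le> length u
    \<Longrightarrow> zero_shift j u ! i = (if i + j < length u then u ! (i + j) else 0)"
  unfolding zero_shift_def by (auto simp: nth_append add.commute)

text \<open>Suppose x 0 has the proper period d and the zero shift by j < d of x c, with c \<noteq> 0, has
  the proper period e.  Both d | e and its negation lead to a contradiction.\<close>
context
  fixes x :: "nat list" and c d e j :: nat
  assumes d: "0 < d" "d \<le> length x" "d dvd length x + 1" and per_d: "periodic d (x @ [0])"
    and e: "0 < e" "e \<le> length x" "e dvd length x + 1"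
    and per_e: "periodic e (zero_shift j (x @ [c]))"
    and c: "c \<noteq> 0" and j: "j < d"
begin

private lemma half_periods: "2 * d \<le> length x + 1" "2 * e \<le> length x + 1"
  using proper_divisor_le_half d e by simp_all

private lemma base_period: "i + m * d \<le> length x \<Longrightarrow> (x @ [0]) ! (i + m * d) = (x @ [0]) ! i"
  using periodic_nth_add[OF per_d] by simp

private lemma shifted_period:
  "i + m * e \<le> length x \<Longrightarrow> zero_shift j (x @ [c]) ! (i + m * e) = zero_shift j (x @ [c]) ! i"
  using periodic_nth_add[OF per_e] half_periods j by simp

private lemma nth_shifted:
  "i \<le> length x \<Longrightarrow> zero_shift j (x @ [c]) ! i
    = (if i + j < length x then (x @ [0]) ! (i + j) else if i + j = length x then c else 0)"
  using nth_zero_shift[of i "x @ [c]" j] half_periods j by (auto simp: nth_append)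

lemma shift_less_period: "j < e"
proof (rule ccontr)
  assume "\<not> j < e"
  then have idx: "length x - j + 1 * e \<le> length x" "length x < length x - j + 1 * e + j"
    using d(2) e(1) j by arith+
  then have "zero_shift j (x @ [c]) ! (length x - j + 1 * e) = 0"
    using nth_shifted[of "length x - j + 1 * e"] by simp
  then show False
    using shifted_period[of "length x - j" 1] nth_shifted[of "length x - j"] idx c d(2) j by simp
qed

lemma period_not_multiple: "\<not> d dvd e"
proof
  assume "d dvd e"
  then obtain m where m: "e = m * d" by (metis dvd_def mult.commute)
  have idx: "length x - j - e + j = length x - e" "length x - e < length x"
    using shift_less_period e(1,2) half_periods(2) by arith+
  have "c = zero_shift j (x @ [c]) ! (length x - j - e)"
    using shifted_period[of "length x - j - e" 1] nth_shifted[of "length x - j"] shift_less_period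
      half_periods by simp
  also have "\<dots> = (x @ [0]) ! (length x - e)"
    using nth_shifted[of "length x - j - e"] idx by simp
  also have "\<dots> = (x @ [0]) ! length x"
    using base_period[of "length x - e" m] m e by simp
  finally show False using c by simp
qed

lemma period_multiple: "d dvd e"
proof (rule ccontr)
  assume "\<not> d dvd e"
  define l where "l = lcm d e"
  have "d dvd l" "e dvd l" unfolding l_def by simp_all
  have "l \<le> length x + 1"
    using d e unfolding l_def by (simp add: lcm_least dvd_imp_le)
  have "0 < l" using d e unfolding l_def by (simp add: lcm_pos_nat)
  then have "e \<le> l" using \<open>e dvd l\<close> by (rule dvd_imp_le[rotated])
  moreover have "l \<noteq> e" using \<open>\<not> d dvd e\<close> \<open>d dvd l\<close> by auto
  ultimately have "e < l" by simp
  obtain p where p: "l - e = p * e"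
    using dvd_diff_nat[OF \<open>e dvd l\<close> dvd_refl] by (metis dvdE mult.commute)
  obtain q where q: "length x + 1 - l = q * d"
    using dvd_diff_nat[OF d(3) \<open>d dvd l\<close>] by (metis dvdE mult.commute)
  define P where "P = length x - j - (l - e)"
  have P: "P + j = e - 1 + q * d" "P + j < length x" "P + p * e = length x - j"
    unfolding P_def using p q \<open>l \<le> length x + 1\<close> \<open>e < l\<close> shift_less_period by auto
  have "(x @ [0]) ! (e - 1) = (x @ [0]) ! (P + j)"
    using base_period[of "e - 1" q] P(1,2) by simp
  also have "\<dots> = zero_shift j (x @ [c]) ! P"
    using nth_shifted[of P] P(2) by simp
  also have "\<dots> = c"
    using shifted_period[of P p] nth_shifted[of "length x - j"] P(3) j d(2) by simp
  finally have "(x @ [0]) ! (e - 1) = c" .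
  moreover have "(x @ [0]) ! (e - 1) = 0"
  proof -
    have "d \<noteq> e" using \<open>\<not> d dvd e\<close> by auto
    then have de: "d + e \<le> length x" using half_periods by simp
    obtain r where "length x + 1 = (r + 1) * d"
      using d by (metis dvdE mult.commute Suc_eq_plus1 not0_implies_Suc mult_0)
    then have "length x = d - 1 + r * d" using d by (simp add: algebra_simps)
    then have "(x @ [0]) ! (d - 1) = (x @ [0]) ! length x" using base_period[of "d - 1" r] by simp
    then have "(x @ [0]) ! (d - 1) = 0" by simp
    have idx: "e - 1 + 1 * d = d - 1 - j + 1 * e + j" "d - 1 - j + 1 * e + j < length x"
      "d - 1 - j + j = d - 1" "d - 1 < length x"
      using d(1) e(1) j de by arith+
    have "(x @ [0]) ! (e - 1) = (x @ [0]) ! (e - 1 + 1 * d)"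
      using base_period[of "e - 1" 1] de e(1) by simp
    also have "\<dots> = zero_shift j (x @ [c]) ! (d - 1 - j + 1 * e)"
      using nth_shifted[of "d - 1 - j + 1 * e"] idx by simp
    also have "\<dots> = zero_shift j (x @ [c]) ! (d - 1 - j)"
      using shifted_period[of "d - 1 - j" 1] idx by simp
    also have "\<dots> = (x @ [0]) ! (d - 1)"
      using nth_shifted[of "d - 1 - j"] idx by simp
    finally show ?thesis using \<open>(x @ [0]) ! (d - 1) = 0\<close> by simp
  qed
  ultimately show False using c by simp
qed

end

lemma primitive_zero_shift:
  assumes "0 < d" "d \<le> length x" "d dvd length x + 1" "periodic d (x @ [0])"
    and "c \<noteq> 0" "j < d"
  shows "primitive (zero_shift j (x @ [c]))"
proof (rule ccontr)
  assume "\<not> primitive (zero_shift j (x @ [c]))"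
  moreover have len: "length (zero_shift j (x @ [c])) = length x + 1" using assms by simp
  moreover have "zero_shift j (x @ [c]) \<noteq> []" using len by auto
  ultimately obtain e where "0 < e" "e < length x + 1" "e dvd length x + 1"
    and "periodic e (zero_shift j (x @ [c]))"
    by (metis not_primitive_imp_periodic)
  then show False
    using period_not_multiple period_multiple assms by (metis less_Suc_eq_le Suc_eq_plus1)
qed

section \<open>The greedy invariant\<close>

lemma card_Collect_insert:
  assumes "finite A" "a \<notin> A"
  shows "card {x \<in> insert a A. P x} = card {x \<in> A. P x} + (if P a then 1 else 0)"
proof -
  have "{x \<in> insert a A. P x} = (if P a then insert a {x \<in> A. P x} else {x \<in> A. P x})"
    by auto
  then show ?thesis using assms by simp
qed

definition factors :: "nat \<Rightarrow> 'a list \<Rightarrow> 'a list set" where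
  "factors n w = {e. length e = n \<and> sublist e w}"

definition window :: "nat \<Rightarrow> 'a list \<Rightarrow> 'a list" where
  "window n w = drop (length w - (n - 1)) w"

definition in_edges :: "nat \<Rightarrow> 'a list \<Rightarrow> 'a list \<Rightarrow> 'a list set" where
  "in_edges n w y = {e \<in> factors n w. tl e = y}"

definition out_edges :: "nat \<Rightarrow> 'a list \<Rightarrow> 'a list \<Rightarrow> 'a list set" where
  "out_edges n w y = {e \<in> factors n w. butlast e = y}"

text \<open>A factor e is read as the edge from butlast e to tl e.  The degree condition says that
  these edges form a trail from 0^(n-1) to the current window; the last conjunct records that
  the procedure always takes the largest admissible symbol.\<close>
definition greedy_inv :: "nat \<Rightarrow> nat \<Rightarrow> nat list \<Rightarrow> bool" where
  "greedy_inv k n w \<longleftrightarrow> n - 1 \<le> length w \<and> set w \<subseteq> {..<k}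
     \<and> (\<forall>e \<in> factors n w. primitive e)
     \<and> card (factors n w) + (n - 1) = length w
     \<and> (\<forall>y. card (in_edges n w y) + (if y = replicate (n - 1) 0 then 1 else 0)
            = card (out_edges n w y) + (if y = window n w then 1 else 0))
     \<and> (\<forall>y a a'. y @ [a] \<in> factors n w \<longrightarrow> a < a' \<longrightarrow> a' < k \<longrightarrow> primitive (y @ [a'])
            \<longrightarrow> y @ [a'] \<in> factors n w)"

lemma finite_factors: "finite (factors n w)"
proof -
  have "factors n w \<subseteq> set (sublists w)" unfolding factors_def by auto
  then show ?thesis by (rule finite_subset) simp
qed

lemma factors_snoc:
  assumes "n \<ge> 1" "n - 1 \<le> length w"
  shows "factors n (w @ [i]) = insert (window n w @ [i]) (factors n w)"
proof -
  have suffix_eq: "e = window n w @ [i]" if suf: "suffix e (w @ [i])" and len: "length e = n"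
    for e
  proof -
    obtain zs where zs: "w @ [i] = zs @ e" using suf unfolding suffix_def by blast
    then have "e = drop (length zs) (w @ [i])" by simp
    moreover have "length zs = length w - (n - 1)"
      using arg_cong[OF zs, of length] len assms by simp
    ultimately show ?thesis unfolding window_def by simp
  qed
  have "suffix (window n w @ [i]) (w @ [i])"
    unfolding window_def suffix_def by (metis append_assoc append_take_drop_id)
  moreover have "length (window n w @ [i]) = n" unfolding window_def using assms by simp
  ultimately show ?thesis
    using suffix_eq unfolding factors_def by (auto simp: sublist_snoc)
qed

lemma window_snoc:
  assumes "n \<ge> 1" "n - 1 \<le> length w"
  shows "window n (w @ [i]) = tl (window n w @ [i])"
proof (cases "n = 1")
  case False
  then have "window n w \<noteq> []" unfolding window_def using assms by simp
  then show ?thesis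
    unfolding window_def using False assms by (simp add: drop_Suc tl_drop Suc_diff_le)
qed (simp add: window_def)

lemma next_sym_SomeD:
  assumes "next_sym k n w = Some i"
  shows "i < k" "primitive (window n w @ [i])" "\<not> sublist (window n w @ [i]) w"
    and "\<And>a. a < k \<Longrightarrow> primitive (window n w @ [a]) \<Longrightarrow> \<not> sublist (window n w @ [a]) w
      \<Longrightarrow> a \<le> i"
proof -
  define S where "S = {i. i < k \<and> primitive (window n w @ [i]) \<and> \<not> sublist (window n w @ [i]) w}"
  have "finite S" unfolding S_def by (rule finite_subset[of _ "{..<k}"]) auto
  moreover have "S \<noteq> {}" "i = Max S"
    using assms unfolding next_sym_def S_def window_def Let_def by (auto split: if_splits)
  ultimately have "i \<in> S" "\<forall>a \<in> S. a \<le> i" by simp_all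
  then show "i < k" "primitive (window n w @ [i])" "\<not> sublist (window n w @ [i]) w"
    and "\<And>a. a < k \<Longrightarrow> primitive (window n w @ [a]) \<Longrightarrow> \<not> sublist (window n w @ [a]) w
      \<Longrightarrow> a \<le> i"
    unfolding S_def by auto
qed

lemma next_sym_NoneD:
  assumes "next_sym k n w = None" "a < k" "primitive (window n w @ [a])"
  shows "sublist (window n w @ [a]) w"
  using assms unfolding next_sym_def window_def Let_def by (auto split: if_splits)

lemma greedy_inv_init:
  assumes "n \<ge> 1" "k \<ge> 1"
  shows "greedy_inv k n (replicate (n - 1) 0)"
proof -
  have "factors n (replicate (n - 1) 0) = {}"
    unfolding factors_def using sublist_length_le assms(1) by fastforce
  moreover have "window n (replicate (n - 1) (0::nat)) = replicate (n - 1) 0"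
    unfolding window_def by simp
  ultimately show ?thesis
    using assms unfolding greedy_inv_def in_edges_def out_edges_def by auto
qed

lemma greedy_inv_snoc:
  assumes inv: "greedy_inv k n w" and "n \<ge> 1" and step: "next_sym k n w = Some i"
  shows "greedy_inv k n (w @ [i])"
proof -
  define x where "x = window n w"
  define e where "e = x @ [i]"
  have len: "n - 1 \<le> length w"
    and bal: "\<And>y. card (in_edges n w y) + (if y = replicate (n - 1) 0 then 1 else 0)
            = card (out_edges n w y) + (if y = x then 1 else 0)"
    and greedy: "\<And>y a a'. y @ [a] \<in> factors n w \<Longrightarrow> a < a' \<Longrightarrow> a' < k
            \<Longrightarrow> primitive (y @ [a']) \<Longrightarrow> y @ [a'] \<in> factors n w"
    using inv unfolding greedy_inv_def x_def by blast+
  have new: "e \<notin> factors n w" and "i < k" "primitive e"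
    using next_sym_SomeD[OF step] unfolding factors_def e_def x_def by auto
  have factors': "factors n (w @ [i]) = insert e (factors n w)"
    unfolding e_def x_def using factors_snoc[OF \<open>n \<ge> 1\<close> len] .
  have window': "window n (w @ [i]) = tl e"
    unfolding e_def x_def using window_snoc[OF \<open>n \<ge> 1\<close> len] .
  have "card (in_edges n (w @ [i]) y) = card (in_edges n w y) + (if tl e = y then 1 else 0)"
    and "card (out_edges n (w @ [i]) y) = card (out_edges n w y) + (if x = y then 1 else 0)" for y
    unfolding in_edges_def out_edges_def factors'
    using card_Collect_insert[OF finite_factors new] by (simp_all add: e_def)
  then have bal': "card (in_edges n (w @ [i]) y) + (if y = replicate (n - 1) 0 then 1 else 0)
      = card (out_edges n (w @ [i]) y) + (if y = window n (w @ [i]) then 1 else 0)" for y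
    using bal[of y] window' by auto
  have greedy': "y @ [a'] \<in> factors n (w @ [i])"
    if "y @ [a] \<in> factors n (w @ [i])" "a < a'" "a' < k" "primitive (y @ [a'])" for y a a'
  proof (cases "y @ [a] = e")
    case True
    then have "y = x" "a = i" unfolding e_def by auto
    then have "sublist (y @ [a']) w"
      using next_sym_SomeD(4)[OF step, of a'] that unfolding x_def by fastforce
    moreover have "length (y @ [a']) = n"
      using \<open>y = x\<close> len \<open>n \<ge> 1\<close> unfolding x_def window_def by simp
    ultimately have "y @ [a'] \<in> factors n w" unfolding factors_def by simp
    then show ?thesis unfolding factors' by simp
  next
    case False
    then show ?thesis using that greedy unfolding factors' by blast
  qed
  have "card (factors n (w @ [i])) = card (factors n w) + 1"
    unfolding factors' using new finite_factors[of n w] by simp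
  then show ?thesis
    using inv \<open>i < k\<close> \<open>primitive e\<close> bal' greedy'
    unfolding greedy_inv_def factors' by auto
qed

lemma greedy_inv_gen:
  assumes "n \<ge> 1" "k \<ge> 1"
  shows "greedy_inv k n (gen k n m)"
proof (induction m)
  case 0
  show ?case using greedy_inv_init[OF assms] by simp
next
  case (Suc m)
  then show ?case using greedy_inv_snoc[OF _ assms(1)] by (auto split: option.split)
qed

lemma factors_subset_prim_words:
  assumes "greedy_inv k n w"
  shows "factors n w \<subseteq> prim_words k n"
  using assms unfolding greedy_inv_def factors_def prim_words_def
  by (auto dest: set_mono_sublist)

lemma finite_prim_words: "finite (prim_words k n)"
proof -
  have "prim_words k n \<subseteq> {xs. set xs \<subseteq> {..<k} \<and> length xs = n}"
    unfolding prim_words_def by auto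
  then show ?thesis by (rule finite_subset) (simp add: finite_lists_length_eq)
qed

lemma gen_terminates:
  assumes "n \<ge> 1" "k \<ge> 1"
  shows "\<exists>m. next_sym k n (gen k n m) = None"
proof (rule ccontr)
  assume "\<nexists>m. next_sym k n (gen k n m) = None"
  then have len: "length (gen k n m) = n - 1 + m" for m
    by (induction m) (auto split: option.split)
  have card_eq: "card (factors n (gen k n m)) + (n - 1) = length (gen k n m)" for m
    using greedy_inv_gen[OF assms] unfolding greedy_inv_def by blast
  have bound: "card (factors n (gen k n m)) \<le> card (prim_words k n)" for m
    by (intro card_mono finite_prim_words factors_subset_prim_words greedy_inv_gen assms)
  have "m \<le> card (prim_words k n)" for m using len[of m] card_eq[of m] bound[of m] by simp
  from this[of "Suc (card (prim_words k n))"] show False by simp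
qed

section \<open>The word at termination\<close>

definition admissible :: "nat \<Rightarrow> nat list \<Rightarrow> nat set" where
  "admissible k y = {a. a < k \<and> primitive (y @ [a])}"

definition saturated :: "nat \<Rightarrow> nat \<Rightarrow> nat list \<Rightarrow> nat list \<Rightarrow> bool" where
  "saturated k n w y \<longleftrightarrow> (\<forall>a \<in> admissible k y. y @ [a] \<in> factors n w)"

lemma finite_admissible: "finite (admissible k y)"
  unfolding admissible_def by (rule finite_subset[of _ "{..<k}"]) auto

context
  fixes k n :: nat and w :: "nat list"
  assumes k: "k \<ge> 1" and n: "n \<ge> 1"
    and inv: "greedy_inv k n w" and stop: "next_sym k n w = None"
begin

lemma factorsD: "e \<in> factors n w \<Longrightarrow> length e = n \<and> set e \<subseteq> {..<k} \<and> primitive e"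
  using inv unfolding greedy_inv_def factors_def by (auto dest: set_mono_sublist)

lemma degree_balance:
  "card (in_edges n w y) + (if y = replicate (n - 1) 0 then 1 else 0)
    = card (out_edges n w y) + (if y = window n w then 1 else 0)"
  using inv unfolding greedy_inv_def by blast

lemma out_edges_subset: "out_edges n w y \<subseteq> (\<lambda>a. y @ [a]) ` admissible k y"
proof
  fix e assume "e \<in> out_edges n w y"
  then have e: "length e = n" "set e \<subseteq> {..<k}" "primitive e" "butlast e = y"
    using factorsD unfolding out_edges_def by auto
  then have "e \<noteq> []" using n by auto
  then have "e = y @ [last e]" "last e < k"
    using e by (auto simp: subset_iff)
  then show "e \<in> (\<lambda>a. y @ [a]) ` admissible k y"
    unfolding admissible_def using e(3) by (metis (mono_tags, lifting) image_eqI mem_Collect_eq)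
qed

lemma in_edges_subset: "in_edges n w y \<subseteq> (\<lambda>a. a # y) ` admissible k y"
proof
  fix e assume "e \<in> in_edges n w y"
  then have e: "length e = n" "set e \<subseteq> {..<k}" "primitive e" "tl e = y"
    using factorsD unfolding in_edges_def by auto
  then have "e \<noteq> []" using n by auto
  then have "e = hd e # y" "hd e < k"
    using e by (auto simp: subset_iff)
  then show "e \<in> (\<lambda>a. a # y) ` admissible k y"
    unfolding admissible_def using e(3) primitive_Cons_iff_snoc
    by (metis (mono_tags, lifting) image_eqI mem_Collect_eq)
qed

lemma out_edges_saturated:
  assumes "saturated k n w y"
  shows "out_edges n w y = (\<lambda>a. y @ [a]) ` admissible k y"
  using out_edges_subset assms unfolding saturated_def out_edges_def by auto

lemma saturated_window: "saturated k n w (window n w)"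
  unfolding saturated_def admissible_def factors_def
  using next_sym_NoneD[OF stop] inv n by (auto simp: greedy_inv_def window_def)

text \<open>An open trail would have one more in-edge than out-edges at its end node, but there all
  admissible out-edges are used, and no node has more admissible in-edges than out-edges.\<close>
lemma window_final: "window n w = replicate (n - 1) 0"
proof (rule ccontr)
  assume ne: "window n w \<noteq> replicate (n - 1) 0"
  define x where "x = window n w"
  have "card (in_edges n w x) = card (out_edges n w x) + 1"
    using degree_balance[of x] ne unfolding x_def by simp
  also have "card (out_edges n w x) = card (admissible k x)"
    using out_edges_saturated[OF saturated_window] unfolding x_def
    by (simp add: card_image inj_on_def)
  finally have "card (in_edges n w x) = card (admissible k x) + 1" .
  moreover have "card (in_edges n w x) \<le> card (admissible k x)"
    using card_mono[OF _ in_edges_subset] finite_admissible card_image_le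
    by (meson finite_imageI le_trans)
  ultimately show False by simp
qed

lemma in_out_balanced: "card (in_edges n w y) = card (out_edges n w y)"
  using degree_balance[of y] window_final by simp

lemma saturated_in_edge:
  assumes "saturated k n w y" and "a \<in> admissible k y"
  shows "a # y \<in> factors n w"
proof -
  define T where "T = (\<lambda>a. a # y) ` admissible k y"
  have "card (in_edges n w y) = card T"
    using in_out_balanced[of y] out_edges_saturated[OF assms(1)] unfolding T_def
    by (simp add: card_image inj_on_def)
  then have "in_edges n w y = T"
    using in_edges_subset finite_admissible unfolding T_def by (metis card_subset_eq finite_imageI)
  moreover have "a # y \<in> T" unfolding T_def using assms(2) by simp
  ultimately show ?thesis unfolding in_edges_def by auto
qed

lemma greedy_closure:
  "y @ [a] \<in> factors n w \<Longrightarrow> a < a' \<Longrightarrow> a' < k \<Longrightarrow> primitive (y @ [a'])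
    \<Longrightarrow> y @ [a'] \<in> factors n w"
  using inv unfolding greedy_inv_def by blast

lemma saturated_least_admissible:
  assumes "x \<noteq> []" "set x \<subseteq> {..<k}"
    and c: "c \<in> admissible k x" "\<forall>a \<in> admissible k x. c \<le> a"
    and sat: "saturated k n w (tl x @ [c])"
  shows "saturated k n w x"
proof -
  have x_c: "hd x # (tl x @ [c]) = x @ [c]" using assms(1) by simp
  have "hd x < k" using assms(1,2) by (auto simp: subset_iff)
  then have "hd x \<in> admissible k (tl x @ [c])"
    using c(1) x_c primitive_Cons_iff_snoc unfolding admissible_def by (metis mem_Collect_eq)
  then have "x @ [c] \<in> factors n w" using saturated_in_edge[OF sat] x_c by metis
  then show ?thesis
    using c greedy_closure unfolding saturated_def admissible_def
    by (metis le_neq_implies_less mem_Collect_eq)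
qed

lemma saturated_zero_shift:
  assumes "set y \<subseteq> {..<k}" "m \<le> length y"
    and "\<forall>j < m. primitive (zero_shift j y @ [0])" "saturated k n w (zero_shift m y)"
  shows "saturated k n w y"
  using assms
proof (induction m arbitrary: y)
  case (Suc m)
  define y' where "y' = tl y @ [0]"
  have shift: "zero_shift j y' = zero_shift (Suc j) y" if "j \<le> m" for j
    unfolding y'_def using zero_shift_tl_snoc that Suc.prems(2) by simp
  have "saturated k n w y'"
  proof (rule Suc.IH)
    show "set y' \<subseteq> {..<k}" using Suc.prems(1) k unfolding y'_def by (cases y) auto
    show "m \<le> length y'" using Suc.prems(2) unfolding y'_def by simp
    show "\<forall>j < m. primitive (zero_shift j y' @ [0])" using Suc.prems(3) shift by simp
    show "saturated k n w (zero_shift m y')" using Suc.prems(4) shift by simp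
  qed
  moreover have "0 \<in> admissible k y"
    using Suc.prems(3) k unfolding admissible_def zero_shift_def by auto
  moreover have "y \<noteq> []" using Suc.prems(2) by auto
  ultimately show ?case
    using saturated_least_admissible Suc.prems(1) unfolding y'_def by blast
qed (simp add: zero_shift_def)

text \<open>If x 0 is a proper power, then the nonzero symbol b is followed in x by fewer zeros than
  the period, so appending zeros to tl x c stays on primitive edges until the node has more
  trailing zeros than x.\<close>
lemma saturated_tl_snoc_of_power:
  assumes x: "x = v @ b # replicate t 0" and "b \<noteq> 0" and len: "length x = n - 1"
    and tl_c: "set (tl x @ [c]) \<subseteq> {..<k}" and "c \<noteq> 0" and "\<not> primitive (x @ [0])"
    and more_zeros: "\<And>x'. length x' = n - 1 \<Longrightarrow> set x' \<subseteq> {..<k}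
      \<Longrightarrow> suffix (replicate (Suc t) 0) x' \<Longrightarrow> saturated k n w x'"
  shows "saturated k n w (tl x @ [c])"
proof -
  obtain d where d: "0 < d" "d < length (x @ [0])" "d dvd length (x @ [0])"
    and per: "periodic d (x @ [0])"
    using \<open>\<not> primitive (x @ [0])\<close> by (metis not_primitive_imp_periodic snoc_eq_iff_butlast)
  have "x @ [0] = v @ b # replicate (Suc t) 0"
    unfolding x by (simp add: replicate_append_same)
  then have "Suc t < d" using periodic_zero_run_less per d(1) \<open>b \<noteq> 0\<close> by metis
  have "x \<noteq> []" using x by simp
  have len_tl_c: "length (tl x @ [c]) = n - 1" using len \<open>x \<noteq> []\<close> by (cases x) auto
  have "primitive (zero_shift j (tl x @ [c]) @ [0])" if "j < Suc t" for j
  proof -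
    have "primitive (zero_shift (Suc j) (x @ [c]))"
      using primitive_zero_shift[of d x] per d \<open>c \<noteq> 0\<close> that \<open>Suc t < d\<close> by simp
    then show ?thesis using zero_shift_Suc \<open>x \<noteq> []\<close> by simp
  qed
  moreover have "Suc t \<le> length (tl x @ [c])"
    using len_tl_c \<open>Suc t < d\<close> d(2) len by simp
  moreover have "saturated k n w (zero_shift (Suc t) (tl x @ [c]))"
  proof (rule more_zeros)
    show "length (zero_shift (Suc t) (tl x @ [c])) = n - 1"
      using len_tl_c calculation(2) by simp
    show "set (zero_shift (Suc t) (tl x @ [c])) \<subseteq> {..<k}"
      using tl_c k unfolding zero_shift_def by (auto dest: in_set_dropD)
    show "suffix (replicate (Suc t) 0) (zero_shift (Suc t) (tl x @ [c]))"
      unfolding zero_shift_def suffix_def by blast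
  qed
  ultimately show ?thesis using saturated_zero_shift tl_c by blast
qed

lemma saturated_zero_suffix:
  assumes "length x = n - 1" "set x \<subseteq> {..<k}" "suffix (replicate t 0) x"
  shows "saturated k n w x"
  using assms
proof (induction "n - 1 - t" arbitrary: t x)
  case 0
  obtain u where x: "x = u @ replicate t 0" using 0 unfolding suffix_def by blast
  moreover have "length u + t = n - 1" using x \<open>length x = n - 1\<close> by simp
  ultimately have "length u = 0" "t = n - 1" using 0(1) by arith+
  then have "x = replicate (n - 1) 0" using x by simp
  then show ?case using saturated_window window_final by simp
next
  case (Suc r)
  obtain u where "x = u @ replicate t 0" using Suc.prems(3) unfolding suffix_def by blast
  moreover have "u \<noteq> []" using calculation Suc.prems(1) Suc.hyps(2) by auto
  ultimately obtain v b where x: "x = v @ b # replicate t 0" by (metis append_Cons append_assoc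
      append_butlast_last_id append_Nil)
  have IH: "saturated k n w x'"
    if "length x' = n - 1" "set x' \<subseteq> {..<k}" "suffix (replicate (Suc t) 0) x'" for x'
  proof -
    have "r = n - 1 - Suc t" using Suc.hyps(2) by arith
    then show ?thesis using Suc.hyps(1) that by blast
  qed
  show ?case
  proof (cases "b = 0")
    case True
    then have "suffix (replicate (Suc t) 0) x"
      unfolding x suffix_def by (metis append_Cons append_Nil replicate_Suc)
    then show ?thesis using IH Suc.prems by blast
  next
    case b: False
    show ?thesis
    proof (cases "admissible k x = {}")
      case True
      then show ?thesis unfolding saturated_def by simp
    next
      case False
      define c where "c = Min (admissible k x)"
      have c: "c \<in> admissible k x" "\<forall>a \<in> admissible k x. c \<le> a"
        unfolding c_def using False finite_admissible by simp_all
      have "x \<noteq> []" using x by simp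
      have tl_c: "set (tl x @ [c]) \<subseteq> {..<k}"
        using c(1) Suc.prems(2) \<open>x \<noteq> []\<close> unfolding admissible_def by (cases x) auto
      have len_tl_c: "length (tl x @ [c]) = n - 1"
        using Suc.prems(1) \<open>x \<noteq> []\<close> by (cases x) auto
      have "saturated k n w (tl x @ [c])"
      proof (cases "c = 0")
        case True
        have "suffix (replicate (Suc t) 0) (tl x @ [c])"
          unfolding x True suffix_def by (cases v) (auto simp: replicate_append_same)
        then show ?thesis using IH tl_c len_tl_c by blast
      next
        case False
        then have "\<not> primitive (x @ [0])"
          using c(2) k unfolding admissible_def by force
        then show ?thesis
          using saturated_tl_snoc_of_power[OF x b Suc.prems(1) tl_c False] IH Suc.hyps(2) by simp
      qed
      then show ?thesis using saturated_least_admissible \<open>x \<noteq> []\<close> Suc.prems(2) c by blast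
    qed
  qed
qed

lemma prim_words_subset_factors: "prim_words k n \<subseteq> factors n w"
proof
  fix u assume "u \<in> prim_words k n"
  then have u: "length u = n" "set u \<subseteq> {..<k}" "primitive u" unfolding prim_words_def by auto
  then have "u \<noteq> []" using n by auto
  then have "u = butlast u @ [last u]" by simp
  moreover have "saturated k n w (butlast u)"
    using saturated_zero_suffix[of "butlast u" 0] u by (auto dest: in_set_butlastD)
  moreover have "last u \<in> admissible k (butlast u)"
    using u \<open>u \<noteq> []\<close> calculation(1) unfolding admissible_def by (auto simp: subset_iff)
  ultimately show "u \<in> factors n w" unfolding saturated_def by metis
qed

end

theorem proposition1:
  fixes k n :: nat
  assumes "k \<ge> 2" and "n \<ge> 1"
  shows "\<exists>m. next_sym k n (gen k n m) = None
            \<and> length (gen k n m) = card (prim_words k n) + n - 1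
            \<and> (\<forall>w \<in> prim_words k n. sublist w (gen k n m))"
proof -
  have k: "k \<ge> 1" using assms(1) by simp
  obtain m where stop: "next_sym k n (gen k n m) = None"
    using gen_terminates[OF assms(2) k] by blast
  have inv: "greedy_inv k n (gen k n m)" using greedy_inv_gen[OF assms(2) k] .
  have factors: "factors n (gen k n m) = prim_words k n"
    using factors_subset_prim_words[OF inv] prim_words_subset_factors[OF k assms(2) inv stop]
    by blast
  moreover have "card (factors n (gen k n m)) + (n - 1) = length (gen k n m)"
    using inv unfolding greedy_inv_def by blast
  ultimately show ?thesis
    using stop assms(2) unfolding factors_def by auto
qed

end
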